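(* Let $\mathcal{A} = (V, V_0, V_1, E, v_I)$ be an arena with $n$ vertices and $w \colon E \to -\mathbb{N} \cup \{\mathrm{R}\}$, and let $W$ be the largest absolute value of an integer weight in the image of $w$. If there is a $cap \in \mathbb{N}$ such that Player~$0$ wins $(\mathcal{A}, \mathsf{Recharge}(w, cap))$, then she also wins $(\mathcal{A}, \mathsf{Recharge}(w, 3\cdot(n-1)\cdot W))$, and she wins the latter game with a finite-state strategy of size three.
   Context: An arena $\mathcal{A} = (V, V_0, V_1, E, v_I)$ consists of a finite directed graph $(V,E)$ in which every vertex has at least one outgoing edge, a partition $V = V_0 \uplus V_1$, and an initial vertex $v_I$. A play is an infinite path $v_0 v_1 \cdots$ with $v_0 = v_I$. A strategy for Player~$i$ is a map $\sigma \colon V^* V_i \to V$ with $(v, \sigma(xv)) \in E$; a play is consistent with $\sigma$ if $v_{n+1} = \sigma(v_0\cdots v_n)$ whenever $v_n \in V_i$. Player~$0$ wins $(\mathcal{A}, \mathrm{Win})$ (with $\sigma$) if all plays consistent with $\sigma$ lie in $\mathrm{Win}$. A memory structure $\mathcal{M} = (M, m_I, \mathrm{Upd})$ has a finite set $M$ of states, initial state $m_I$, update $\mathrm{Upd} \colon M \times E \to M$, extended by $\mathrm{Upd}^+(v_0) = m_I$, $\mathrm{Upd}^+(v_0\cdots v_n v_{n+1}) = \mathrm{Upd}(\mathrm{Upd}^+(v_0\cdots v_n),(v_n,v_{n+1}))$; with a next-move function $\mathrm{Nxt} \colon V_0 \times M \to V$ (with $(v,\mathrm{Nxt}(v,m))\in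 E$) it induces the strategy $\sigma(v_0\cdots v_k) = \mathrm{Nxt}(v_k, \mathrm{Upd}^+(v_0\cdots v_k))$; such a strategy is finite-state of size $|M|$. A recharge weight function $w \colon E \to -\mathbb{N} \cup \{\mathrm{R}\}$ labels each edge with a non-positive integer or the recharge action $\mathrm{R}$. For a finite path $x$ without $\mathrm{R}$-edges, $\mathrm{EL}(x)$ is the sum of its edge weights. $\mathrm{EL}_{cap}(v_0\cdots v_k) = cap + \mathrm{EL}(x)$ where $x$ is the longest suffix of $v_0\cdots v_k$ containing no $\mathrm{R}$-edge. $\mathsf{Recharge}(w,cap) = \{v_0 v_1 \cdots \mid \forall k.\ \mathrm{EL}_{cap}(v_0\cdots v_k) \ge 0\}$. *)

theory Defs
  imports Main
begin

(* Arena (V, V0, V1, E, vI) with V1 = V - V0 *)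
definition arena :: "'v set \<Rightarrow> 'v set \<Rightarrow> ('v \<times> 'v) set \<Rightarrow> 'v \<Rightarrow> bool" where
  "arena V V0 E vI \<longleftrightarrow> finite V \<and> V0 \<subseteq> V \<and> E \<subseteq> V \<times> V \<and>
     (\<forall>v\<in>V. \<exists>u. (v, u) \<in> E) \<and> vI \<in> V"

definition play :: "('v \<times> 'v) set \<Rightarrow> 'v \<Rightarrow> (nat \<Rightarrow> 'v) \<Rightarrow> bool" where
  "play E vI \<rho> \<longleftrightarrow> \<rho> 0 = vI \<and> (\<forall>n. (\<rho> n, \<rho> (Suc n)) \<in> E)"

definition edges_of :: "'v list \<Rightarrow> ('v \<times> 'v) list" where
  "edges_of xs = zip xs (tl xs)"

definition fin_path :: "'v set \<Rightarrow> ('v \<times> 'v) set \<Rightarrow> 'v list \<Rightarrow> bool" where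
  "fin_path V E xs \<longleftrightarrow> xs \<noteq> [] \<and> set xs \<subseteq> V \<and> set (edges_of xs) \<subseteq> E"

definition strategy0 :: "'v set \<Rightarrow> 'v set \<Rightarrow> ('v \<times> 'v) set \<Rightarrow> ('v list \<Rightarrow> 'v) \<Rightarrow> bool" where
  "strategy0 V V0 E \<sigma> \<longleftrightarrow>
     (\<forall>xs. fin_path V E xs \<and> last xs \<in> V0 \<longrightarrow> (last xs, \<sigma> xs) \<in> E)"

definition consistent0 :: "'v set \<Rightarrow> ('v list \<Rightarrow> 'v) \<Rightarrow> (nat \<Rightarrow> 'v) \<Rightarrow> bool" where
  "consistent0 V0 \<sigma> \<rho> \<longleftrightarrow> (\<forall>n. \<rho> n \<in> V0 \<longrightarrow> \<rho> (Suc n) = \<sigma> (map \<rho> [0..<Suc n]))"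

definition wins0_with :: "'v set \<Rightarrow> 'v set \<Rightarrow> ('v \<times> 'v) set \<Rightarrow> 'v \<Rightarrow> (nat \<Rightarrow> 'v) set
    \<Rightarrow> ('v list \<Rightarrow> 'v) \<Rightarrow> bool" where
  "wins0_with V V0 E vI Win \<sigma> \<longleftrightarrow> strategy0 V V0 E \<sigma> \<and>
     (\<forall>\<rho>. play E vI \<rho> \<and> consistent0 V0 \<sigma> \<rho> \<longrightarrow> \<rho> \<in> Win)"

definition wins0 :: "'v set \<Rightarrow> 'v set \<Rightarrow> ('v \<times> 'v) set \<Rightarrow> 'v \<Rightarrow> (nat \<Rightarrow> 'v) set \<Rightarrow> bool" where
  "wins0 V V0 E vI Win \<longleftrightarrow> (\<exists>\<sigma>. wins0_with V V0 E vI Win \<sigma>)"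

definition upd_plus :: "'m \<Rightarrow> ('m \<Rightarrow> 'v \<times> 'v \<Rightarrow> 'm) \<Rightarrow> 'v list \<Rightarrow> 'm" where
  "upd_plus mI Upd xs = fold (\<lambda>e m. Upd m e) (edges_of xs) mI"

definition memory_structure :: "('v \<times> 'v) set \<Rightarrow> 'm set \<Rightarrow> 'm \<Rightarrow> ('m \<Rightarrow> 'v \<times> 'v \<Rightarrow> 'm) \<Rightarrow> bool" where
  "memory_structure E M mI Upd \<longleftrightarrow> finite M \<and> mI \<in> M \<and> (\<forall>m\<in>M. \<forall>e\<in>E. Upd m e \<in> M)"

definition next_move :: "'v set \<Rightarrow> ('v \<times> 'v) set \<Rightarrow> 'm set \<Rightarrow> ('v \<Rightarrow> 'm \<Rightarrow> 'v) \<Rightarrow> bool" where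
  "next_move V0 E M Nxt \<longleftrightarrow> (\<forall>v\<in>V0. \<forall>m\<in>M. (v, Nxt v m) \<in> E)"

definition induced_strategy :: "'m \<Rightarrow> ('m \<Rightarrow> 'v \<times> 'v \<Rightarrow> 'm) \<Rightarrow> ('v \<Rightarrow> 'm \<Rightarrow> 'v) \<Rightarrow> 'v list \<Rightarrow> 'v" where
  "induced_strategy mI Upd Nxt xs = Nxt (last xs) (upd_plus mI Upd xs)"

(* recharge weights: Cost c stands for the weight -c, Rchg for the recharge action R *)
datatype rweight = Cost nat | Rchg

definition no_recharge :: "('v \<times> 'v \<Rightarrow> rweight) \<Rightarrow> 'v list \<Rightarrow> bool" where
  "no_recharge w xs \<longleftrightarrow> (\<forall>e\<in>set (edges_of xs). w e \<noteq> Rchg)"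

definition EL :: "('v \<times> 'v \<Rightarrow> rweight) \<Rightarrow> 'v list \<Rightarrow> int" where
  "EL w xs = sum_list (map (\<lambda>e. case w e of Cost c \<Rightarrow> - int c | Rchg \<Rightarrow> 0) (edges_of xs))"

definition EL_cap :: "('v \<times> 'v \<Rightarrow> rweight) \<Rightarrow> nat \<Rightarrow> 'v list \<Rightarrow> int" where
  "EL_cap w cap xs = int cap + EL w (drop (LEAST j. no_recharge w (drop j xs)) xs)"

definition Recharge :: "('v \<times> 'v \<Rightarrow> rweight) \<Rightarrow> nat \<Rightarrow> (nat \<Rightarrow> 'v) set" where
  "Recharge w cap = {\<rho>. \<forall>k. EL_cap w cap (map \<rho> [0..<Suc k]) \<ge> 0}"

definition max_weight :: "('v \<times> 'v) set \<Rightarrow> ('v \<times> 'v \<Rightarrow> rweight) \<Rightarrow> nat" where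
  "max_weight E w = Max ({c. \<exists>e\<in>E. w e = Cost c} \<union> {0})"

end

theory Submission
  imports Defs
begin

text \<open>Fix a strategy \<open>\<sigma>\<close> winning for some capacity and, for every vertex \<open>v\<close> reached by a play
  consistent with \<open>\<sigma>\<close>, let \<open>r v\<close> be the least energy level with which such a play reaches \<open>v\<close>.
  The edge \<open>\<sigma>\<close> takes after a least-energy history of a Player 0 vertex, and every edge leaving
  a reached Player 1 vertex, lead to reached vertices and decrease \<open>r\<close> by at least their cost.
  Only the order of the values of \<open>r\<close> matters for this, so \<open>W\<close> times the rank of \<open>r v\<close> among
  them is such a certificate as well, now bounded by \<open>(n - 1) W\<close>. The positional strategy that
  follows certificate edges keeps the energy level above the certificate and therefore wins with
  capacity \<open>(n - 1) W \<le> 3 (n - 1) W\<close>.\<close>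

lemma edges_of_snoc: "xs \<noteq> [] \<Longrightarrow> edges_of (xs @ [y]) = edges_of xs @ [(last xs, y)]"
  unfolding edges_of_def by (induction xs) (auto simp: neq_Nil_conv)

lemma edges_of_drop: "edges_of (drop j xs) = drop j (edges_of xs)"
  unfolding edges_of_def by (simp add: drop_zip drop_tl)

lemma nth_edge_in_edges_of: "Suc i < length xs \<Longrightarrow> (xs ! i, xs ! Suc i) \<in> set (edges_of xs)"
proof -
  assume i: "Suc i < length xs"
  then have "zip xs (tl xs) ! i = (xs ! i, xs ! Suc i)" by (simp add: nth_tl)
  moreover have "i < length (zip xs (tl xs))" using i by simp
  ultimately show ?thesis unfolding edges_of_def by (metis nth_mem)
qed

lemma EL_snoc:
  "xs \<noteq> [] \<Longrightarrow> EL w (xs @ [y]) = EL w xs + (case w (last xs, y) of Cost c \<Rightarrow> - int c | Rchg \<Rightarrow> 0)"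
  unfolding EL_def by (simp add: edges_of_snoc)

lemma EL_cap_singleton: "EL_cap w cap [v] = int cap"
  unfolding EL_cap_def EL_def edges_of_def by (cases "LEAST j. no_recharge w (drop j [v])") simp_all

lemma EL_cap_snoc_Cost:
  assumes "xs \<noteq> []" "w (last xs, y) = Cost c"
  shows "EL_cap w cap (xs @ [y]) = EL_cap w cap xs - int c"
proof -
  have "no_recharge w (drop j (xs @ [y])) = no_recharge w (drop j xs)" for j
  proof -
    have "edges_of (drop j (xs @ [y]))
        = edges_of (drop j xs) @ drop (j - length (edges_of xs)) [(last xs, y)]"
      unfolding edges_of_drop edges_of_snoc[OF assms(1)] by (rule drop_append)
    then show ?thesis
      using assms(2) by (auto simp: no_recharge_def simp del: drop_append dest: in_set_dropD)
  qed
  then have least: "(LEAST j. no_recharge w (drop j (xs @ [y]))) = (LEAST j. no_recharge w (drop j xs))"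
    by simp
  define L where "L = (LEAST j. no_recharge w (drop j xs))"
  have "drop (length xs - 1) xs = [last xs]"
    using assms(1) by (cases xs rule: rev_exhaust) auto
  then have "no_recharge w (drop (length xs - 1) xs)"
    by (simp add: no_recharge_def edges_of_def)
  then have "L < length xs"
    unfolding L_def using assms(1) by (metis Least_le diff_less le_less_trans length_greater_0_conv zero_less_one)
  then show ?thesis
    unfolding EL_cap_def least L_def[symmetric] using EL_snoc[of "drop L xs" w y] assms(2) by simp
qed

lemma EL_cap_snoc_Rchg:
  assumes "xs \<noteq> []" "w (last xs, y) = Rchg"
  shows "EL_cap w cap (xs @ [y]) = int cap"
proof -
  have "(LEAST j. no_recharge w (drop j (xs @ [y]))) = length xs"
  proof (rule Least_equality)
    show "no_recharge w (drop (length xs) (xs @ [y]))"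
      by (simp add: no_recharge_def edges_of_def)
  next
    fix j assume no_R: "no_recharge w (drop j (xs @ [y]))"
    show "length xs \<le> j"
    proof (rule ccontr)
      assume "\<not> length xs \<le> j"
      then have "(last xs, y) \<in> set (edges_of (drop j (xs @ [y])))"
        unfolding edges_of_drop edges_of_snoc[OF assms(1)] by (simp add: edges_of_def)
      then show False using no_R assms(2) by (auto simp: no_recharge_def)
    qed
  qed
  then show ?thesis by (simp add: EL_cap_def EL_def edges_of_def)
qed

lemma EL_cap_prefix_Suc:
  "EL_cap w cap (map \<rho> [0..<Suc (Suc k)]) =
     (case w (\<rho> k, \<rho> (Suc k)) of
        Cost c \<Rightarrow> EL_cap w cap (map \<rho> [0..<Suc k]) - int c
      | Rchg \<Rightarrow> int cap)"
  using EL_cap_snoc_Cost[of "map \<rho> [0..<Suc k]" w] EL_cap_snoc_Rchg[of "map \<rho> [0..<Suc k]" w]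
  by (cases "w (\<rho> k, \<rho> (Suc k))") simp_all

lemma EL_cap_prefix_le_cap: "EL_cap w cap (map \<rho> [0..<Suc k]) \<le> int cap"
proof (induction k)
  case 0
  show ?case by (simp add: EL_cap_singleton)
next
  case (Suc k)
  then show ?case unfolding EL_cap_prefix_Suc by (simp split: rweight.split)
qed

lemma fin_path_snoc:
  "\<lbrakk>fin_path V E xs; (last xs, y) \<in> E; E \<subseteq> V \<times> V\<rbrakk> \<Longrightarrow> fin_path V E (xs @ [y])"
  unfolding fin_path_def by (auto simp: edges_of_snoc)

lemma play_in_vertices:
  assumes "arena V V0 E vI" "play E vI \<rho>"
  shows "\<rho> k \<in> V"
proof (cases k)
  case 0
  then show ?thesis using assms by (simp add: arena_def play_def)
next
  case (Suc j)
  then have "(\<rho> j, \<rho> k) \<in> E" using assms(2) by (simp add: play_def)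
  then show ?thesis using assms(1) by (auto simp: arena_def)
qed

lemma play_prefix_fin_path:
  assumes "arena V V0 E vI" "play E vI \<rho>"
  shows "fin_path V E (map \<rho> [0..<Suc k])"
proof (induction k)
  case 0
  then show ?case using play_in_vertices[OF assms] by (simp add: fin_path_def edges_of_def)
next
  case (Suc k)
  have "(\<rho> k, \<rho> (Suc k)) \<in> E" using assms(2) by (simp add: play_def)
  then show ?case
    using fin_path_snoc[OF Suc.IH] assms(1) by (simp add: arena_def)
qed

lemma snoc_iterate_prefix:
  assumes hs_Suc: "\<And>n. hs (Suc n) = hs n @ [f (hs n)]" and ne: "hs 0 \<noteq> []"
  shows "map (\<lambda>i. hs i ! i) [0..<length (hs 0) + n] = hs n"
proof -
  have len: "length (hs n) = length (hs 0) + n" for n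
    by (induction n) (simp_all add: hs_Suc)
  have take_hs: "take (length (hs n)) (hs m) = hs n" if "n \<le> m" for n m
    using that
  proof (induction m rule: dec_induct)
    case base
    show ?case by simp
  next
    case (step m)
    then show ?case using len[of n] len[of m] by (simp add: hs_Suc)
  qed
  have nth_hs: "hs m ! i = hs n ! i" if "i < length (hs n)" "n \<le> m" for i n m
    by (metis take_hs[OF that(2)] nth_take that(1))
  have "hs i ! i = hs n ! i" if "i < length (hs 0) + n" for i
  proof -
    have "i < length (hs i)" using ne len[of i] by simp
    then have "hs i ! i = hs (max i n) ! i" using nth_hs[of i i "max i n"] by simp
    also have "\<dots> = hs n ! i" using nth_hs[of i n "max i n"] that len[of n] by simp
    finally show ?thesis .
  qed
  then show ?thesis by (intro nth_equalityI) (simp_all add: len[of n])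
qed

lemma path_extension_by_move:
  assumes fp: "fin_path V E h" and EV: "E \<subseteq> V \<times> V"
    and move: "\<And>g. fin_path V E g \<Longrightarrow> (last g, nx g) \<in> E"
  obtains \<rho> where "\<forall>i<length h. \<rho> i = h ! i" and "\<forall>i. (\<rho> i, \<rho> (Suc i)) \<in> E"
    and "\<forall>i. length h \<le> Suc i \<longrightarrow> \<rho> (Suc i) = nx (map \<rho> [0..<Suc i])"
proof -
  define hs where "hs = rec_nat h (\<lambda>_ g. g @ [nx g])"
  have hs_0: "hs 0 = h" and hs_Suc: "\<And>n. hs (Suc n) = hs n @ [nx (hs n)]"
    by (simp_all add: hs_def)
  have ne: "h \<noteq> []" using fp by (simp add: fin_path_def)
  have fp_hs: "fin_path V E (hs n)" for n
  proof (induction n)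
    case 0
    show ?case using fp by (simp add: hs_0)
  next
    case (Suc n)
    show ?case unfolding hs_Suc using fin_path_snoc[OF Suc.IH move[OF Suc.IH] EV] .
  qed
  define \<rho> where "\<rho> = (\<lambda>i. hs i ! i)"
  have prefix: "map \<rho> [0..<length h + n] = hs n" for n
  proof -
    have "map (\<lambda>i. hs i ! i) [0..<length (hs 0) + n] = hs n"
      by (rule snoc_iterate_prefix[of hs nx n, OF hs_Suc]) (simp add: hs_0 ne)
    then show ?thesis by (simp only: \<rho>_def hs_0)
  qed
  have "\<rho> i = h ! i" if "i < length h" for i
    using that arg_cong[OF prefix[of 0], of "\<lambda>xs. xs ! i"] by (simp add: hs_0)
  moreover have "(\<rho> i, \<rho> (Suc i)) \<in> E" for i
  proof -
    let ?p = "map \<rho> [0..<length h + Suc i]"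
    have "Suc i < length ?p" using ne by simp
    then have "(?p ! i, ?p ! Suc i) \<in> set (edges_of ?p)" by (rule nth_edge_in_edges_of)
    moreover have "?p ! i = \<rho> i" "?p ! Suc i = \<rho> (Suc i)"
      using ne by (simp_all add: nth_map_upt del: upt_Suc)
    moreover have "fin_path V E ?p" using fp_hs[of "Suc i"] prefix[of "Suc i"] by (simp only:)
    ultimately show ?thesis by (auto simp: fin_path_def)
  qed
  moreover have "\<rho> (Suc i) = nx (map \<rho> [0..<Suc i])" if "length h \<le> Suc i" for i
  proof -
    define n where "n = Suc i - length h"
    have hs_n: "hs n = map \<rho> [0..<Suc i]" using prefix[of n] that by (simp add: n_def)
    have "hs (Suc n) = map \<rho> [0..<Suc (Suc i)]"
      using prefix[of "Suc n"] that by (simp add: n_def)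
    then have "\<rho> (Suc i) = hs (Suc n) ! Suc i" by (simp del: upt_Suc)
    also have "\<dots> = nx (hs n)"
      using hs_Suc[of n] nth_append_length[of "hs n"] hs_n by (simp del: upt_Suc)
    finally show ?thesis unfolding hs_n .
  qed
  ultimately show ?thesis using that by blast
qed

lemma consistent_history_extends:
  assumes ar: "arena V V0 E vI" and st: "strategy0 V V0 E \<sigma>"
    and fp: "fin_path V E h" and h0: "hd h = vI"
    and cons: "\<forall>i. Suc i < length h \<longrightarrow> h ! i \<in> V0 \<longrightarrow> h ! Suc i = \<sigma> (take (Suc i) h)"
  shows "\<exists>\<rho>. play E vI \<rho> \<and> consistent0 V0 \<sigma> \<rho> \<and> (\<forall>i<length h. \<rho> i = h ! i)"
proof -
  define nx where "nx g = (if last g \<in> V0 then \<sigma> g else SOME u. (last g, u) \<in> E)" for g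
  have "(last g, nx g) \<in> E" if "fin_path V E g" for g
  proof (cases "last g \<in> V0")
    case True
    then show ?thesis using st that by (simp add: strategy0_def nx_def)
  next
    case False
    have "last g \<in> V" using that by (auto simp: fin_path_def)
    then have "\<exists>u. (last g, u) \<in> E" using ar by (auto simp: arena_def)
    then have "(last g, SOME u. (last g, u) \<in> E) \<in> E" by (rule someI_ex)
    then show ?thesis using False by (simp add: nx_def)
  qed
  moreover have "E \<subseteq> V \<times> V" using ar by (simp add: arena_def)
  ultimately obtain \<rho> where agree: "\<forall>i<length h. \<rho> i = h ! i"
    and edges: "\<forall>i. (\<rho> i, \<rho> (Suc i)) \<in> E"
    and moves: "\<forall>i. length h \<le> Suc i \<longrightarrow> \<rho> (Suc i) = nx (map \<rho> [0..<Suc i])"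
    using path_extension_by_move[OF fp] by metis
  have ne: "h \<noteq> []" using fp by (simp add: fin_path_def)
  have "play E vI \<rho>" using agree edges ne h0 by (simp add: play_def hd_conv_nth)
  moreover have "\<rho> (Suc i) = \<sigma> (map \<rho> [0..<Suc i])" if "\<rho> i \<in> V0" for i
  proof (cases "Suc i < length h")
    case True
    have "take (Suc i) h = map \<rho> [0..<Suc i]"
      by (rule nth_equalityI) (use True agree in \<open>auto simp del: upt_Suc\<close>)
    moreover have "h ! i \<in> V0" using that agree True by simp
    then have "h ! Suc i = \<sigma> (take (Suc i) h)" using cons True by blast
    ultimately show ?thesis using agree True by simp
  next
    case False
    then show ?thesis using moves that by (simp add: nx_def)
  qed
  then have "consistent0 V0 \<sigma> \<rho>" unfolding consistent0_def by blast
  ultimately show ?thesis using agree by blast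
qed

lemma consistent_play_exists:
  assumes "arena V V0 E vI" "strategy0 V V0 E \<sigma>"
  shows "\<exists>\<rho>. play E vI \<rho> \<and> consistent0 V0 \<sigma> \<rho>"
proof -
  have "fin_path V E [vI]" using assms(1) by (simp add: fin_path_def arena_def edges_of_def)
  then show ?thesis using consistent_history_extends[OF assms, of "[vI]"] by auto
qed

lemma consistent_play_deviation:
  assumes ar: "arena V V0 E vI" and st: "strategy0 V V0 E \<sigma>"
    and p: "play E vI \<rho>" "consistent0 V0 \<sigma> \<rho>"
    and opp: "\<rho> k \<notin> V0" and edge: "(\<rho> k, u) \<in> E"
  shows "\<exists>\<rho>'. play E vI \<rho>' \<and> consistent0 V0 \<sigma> \<rho>' \<and>
           map \<rho>' [0..<Suc k] = map \<rho> [0..<Suc k] \<and> \<rho>' (Suc k) = u"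
proof -
  define h where "h = map \<rho> [0..<Suc k] @ [u]"
  have len: "length h = Suc (Suc k)" by (simp add: h_def)
  have h_nth: "h ! i = (if i < Suc k then \<rho> i else u)" if "i < Suc (Suc k)" for i
    using that by (simp add: h_def nth_append del: upt_Suc)
  have "fin_path V E h"
    unfolding h_def using fin_path_snoc[OF play_prefix_fin_path[OF ar p(1), of k]] edge ar
    by (simp add: arena_def)
  moreover have "hd h = vI" using p(1) by (simp add: h_def play_def hd_map del: upt_Suc)
  moreover have "\<forall>i. Suc i < length h \<longrightarrow> h ! i \<in> V0 \<longrightarrow> h ! Suc i = \<sigma> (take (Suc i) h)"
  proof (intro allI impI)
    fix i assume "Suc i < length h" and "h ! i \<in> V0"
    then have ik: "i < Suc k" using len by simp
    have "\<rho> i \<in> V0" using \<open>h ! i \<in> V0\<close> h_nth[of i] ik by simp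
    moreover have "i < k" using ik \<open>\<rho> i \<in> V0\<close> opp by (cases "i = k") auto
    moreover have "take (Suc i) h = map \<rho> [0..<Suc i]"
      using \<open>i < k\<close> by (simp add: h_def take_map del: upt_Suc)
    ultimately show "h ! Suc i = \<sigma> (take (Suc i) h)"
      using p(2) h_nth[of "Suc i"] by (simp add: consistent0_def del: upt_Suc)
  qed
  ultimately obtain \<rho>' where \<rho>': "play E vI \<rho>'" "consistent0 V0 \<sigma> \<rho>'" "\<forall>i<length h. \<rho>' i = h ! i"
    using consistent_history_extends[OF ar st] by blast
  then have "map \<rho>' [0..<Suc k] = map \<rho> [0..<Suc k]" "\<rho>' (Suc k) = u"
    using len h_nth by simp_all
  with \<rho>' show ?thesis by blast
qed

definition safe_edge ::
  "('v \<times> 'v) set \<Rightarrow> ('v \<times> 'v \<Rightarrow> rweight) \<Rightarrow> 'v set \<Rightarrow> ('v \<Rightarrow> nat) \<Rightarrow> 'v \<Rightarrow> 'v \<Rightarrow> bool" where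
  "safe_edge E w U r v u \<longleftrightarrow> (v, u) \<in> E \<and> u \<in> U \<and> (\<forall>c. w (v, u) = Cost c \<longrightarrow> r u + c \<le> r v)"

text \<open>\<open>r v\<close> is an energy level that suffices at \<open>v\<close>; a recharge edge restores the capacity \<open>K\<close>
  and so only has to stay in \<open>U\<close>.\<close>
definition energy_certificate ::
  "'v set \<Rightarrow> ('v \<times> 'v) set \<Rightarrow> ('v \<times> 'v \<Rightarrow> rweight) \<Rightarrow> 'v set \<Rightarrow> ('v \<Rightarrow> nat) \<Rightarrow> nat \<Rightarrow> bool" where
  "energy_certificate V0 E w U r K \<longleftrightarrow>
     (\<forall>v\<in>U. r v \<le> K) \<and>
     (\<forall>v\<in>U. v \<in> V0 \<longrightarrow> (\<exists>u. safe_edge E w U r v u)) \<and>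
     (\<forall>v\<in>U. v \<notin> V0 \<longrightarrow> (\<forall>u. (v, u) \<in> E \<longrightarrow> safe_edge E w U r v u))"

lemma energy_certificate_mono:
  "\<lbrakk>energy_certificate V0 E w U r K; K \<le> K'\<rbrakk> \<Longrightarrow> energy_certificate V0 E w U r K'"
  unfolding energy_certificate_def by (meson le_trans)

definition rank_in :: "'v set \<Rightarrow> ('v \<Rightarrow> nat) \<Rightarrow> 'v \<Rightarrow> nat" where
  "rank_in U r v = card {t \<in> r ` U. t < r v}"

lemma rank_in_less_card:
  assumes "finite U" "v \<in> U"
  shows "rank_in U r v < card U"
proof -
  have "{t \<in> r ` U. t < r v} \<subset> r ` U" using assms(2) by auto
  then have "rank_in U r v < card (r ` U)"
    unfolding rank_in_def using assms(1) by (simp add: psubset_card_mono)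
  also have "\<dots> \<le> card U" using assms(1) by (rule card_image_le)
  finally show ?thesis .
qed

lemma rank_in_mono: "\<lbrakk>finite U; r u \<le> r v\<rbrakk> \<Longrightarrow> rank_in U r u \<le> rank_in U r v"
  unfolding rank_in_def by (rule card_mono) auto

lemma rank_in_strict_mono:
  assumes "finite U" "u \<in> U" "r u < r v"
  shows "rank_in U r u < rank_in U r v"
proof -
  have "insert (r u) {t \<in> r ` U. t < r u} \<subseteq> {t \<in> r ` U. t < r v}" using assms(2,3) by auto
  moreover have "finite {t \<in> r ` U. t < r v}" using assms(1) by simp
  ultimately have "card (insert (r u) {t \<in> r ` U. t < r u}) \<le> rank_in U r v"
    unfolding rank_in_def by (rule card_mono[rotated])
  then show ?thesis using assms(1) by (simp add: rank_in_def)
qed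

text \<open>A cost-\<open>c\<close> edge with \<open>0 < c \<le> W\<close> that is safe for \<open>r\<close> strictly decreases the rank of \<open>r\<close>,
  so it stays safe for \<open>W\<close> times the rank.\<close>
lemma safe_edge_rank_in:
  assumes "finite U" "safe_edge E w U r v u" "\<forall>c. w (v, u) = Cost c \<longrightarrow> c \<le> W"
  shows "safe_edge E w U (\<lambda>x. W * rank_in U r x) v u"
proof -
  have "W * rank_in U r u + c \<le> W * rank_in U r v" if cost: "w (v, u) = Cost c" for c
  proof (cases "c = 0")
    case True
    then show ?thesis
      using assms(2) cost rank_in_mono[OF assms(1), of r u v] by (simp add: safe_edge_def)
  next
    case False
    then have "Suc (rank_in U r u) \<le> rank_in U r v"
      using assms(2) cost rank_in_strict_mono[OF assms(1), of u r v]
      by (simp add: safe_edge_def Suc_le_eq)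
    then have "W * Suc (rank_in U r u) \<le> W * rank_in U r v" by (rule mult_le_mono2)
    then show ?thesis using assms(3) cost by simp
  qed
  then show ?thesis using assms(2) by (simp add: safe_edge_def)
qed

lemma energy_certificate_rank_in:
  assumes "finite U" "energy_certificate V0 E w U r K"
    and weights: "\<forall>e\<in>E. \<forall>c. w e = Cost c \<longrightarrow> c \<le> W"
  shows "energy_certificate V0 E w U (\<lambda>x. W * rank_in U r x) ((card U - 1) * W)"
proof -
  have safe: "safe_edge E w U (\<lambda>x. W * rank_in U r x) v u" if "safe_edge E w U r v u" for v u
  proof -
    have "\<forall>c. w (v, u) = Cost c \<longrightarrow> c \<le> W" using weights that by (auto simp: safe_edge_def)
    with safe_edge_rank_in[OF assms(1) that] show ?thesis .
  qed
  have "W * rank_in U r v \<le> (card U - 1) * W" if "v \<in> U" for v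
  proof -
    have "rank_in U r v \<le> card U - 1" using rank_in_less_card[OF assms(1) that, of r] by simp
    then show ?thesis by (simp add: mult.commute)
  qed
  with assms(2) safe show ?thesis unfolding energy_certificate_def by blast
qed

lemma finite_edges_of_arena: "arena V V0 E vI \<Longrightarrow> finite E"
  unfolding arena_def by (metis finite_SigmaI finite_subset)

lemma Cost_le_max_weight:
  assumes "finite E" "e \<in> E" "w e = Cost c"
  shows "c \<le> max_weight E w"
proof -
  have "{c. \<exists>e\<in>E. w e = Cost c} \<subseteq> (\<lambda>e. case w e of Cost c \<Rightarrow> c | Rchg \<Rightarrow> 0) ` E"
    by (force split: rweight.splits)
  then have "finite ({c. \<exists>e\<in>E. w e = Cost c} \<union> {0})"
    using finite_subset[OF _ finite_imageI[OF assms(1)]] by blast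
  then show ?thesis unfolding max_weight_def using assms(2,3) by (auto intro: Max_ge)
qed

definition certificate_move ::
  "('v \<times> 'v) set \<Rightarrow> ('v \<times> 'v \<Rightarrow> rweight) \<Rightarrow> 'v set \<Rightarrow> ('v \<Rightarrow> nat) \<Rightarrow> 'v \<Rightarrow> 'v" where
  "certificate_move E w U r v =
     (if \<exists>u. safe_edge E w U r v u then SOME u. safe_edge E w U r v u else SOME u. (v, u) \<in> E)"

lemma certificate_move_safe:
  "\<exists>u. safe_edge E w U r v u \<Longrightarrow> safe_edge E w U r v (certificate_move E w U r v)"
  unfolding certificate_move_def by (auto intro: someI_ex)

lemma certificate_move_edge:
  assumes "arena V V0 E vI" "v \<in> V0"
  shows "(v, certificate_move E w U r v) \<in> E"
proof (cases "\<exists>u. safe_edge E w U r v u")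
  case True
  then have "safe_edge E w U r v (certificate_move E w U r v)" by (rule certificate_move_safe)
  then show ?thesis by (simp add: safe_edge_def)
next
  case False
  have "\<exists>u. (v, u) \<in> E" using assms by (auto simp: arena_def)
  then have "(v, SOME u. (v, u) \<in> E) \<in> E" by (rule someI_ex)
  then show ?thesis using False by (simp add: certificate_move_def)
qed

text \<open>Along a play that follows safe edges from \<open>U\<close>, the energy level never drops below \<open>r\<close>.\<close>
lemma energy_certificate_positional_wins:
  assumes ar: "arena V V0 E vI" and vI: "vI \<in> U"
    and cert: "energy_certificate V0 E w U r K"
  shows "wins0_with V V0 E vI (Recharge w K) (\<lambda>xs. certificate_move E w U r (last xs))"
proof -
  let ?\<sigma> = "\<lambda>xs. certificate_move E w U r (last xs)"
  have "\<rho> \<in> Recharge w K" if p: "play E vI \<rho>" and c: "consistent0 V0 ?\<sigma> \<rho>" for \<rho>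
  proof -
    have invariant: "\<rho> k \<in> U \<and> int (r (\<rho> k)) \<le> EL_cap w K (map \<rho> [0..<Suc k])" for k
    proof (induction k)
      case 0
      then show ?case using vI cert p by (simp add: EL_cap_singleton play_def energy_certificate_def)
    next
      case (Suc k)
      have "safe_edge E w U r (\<rho> k) (\<rho> (Suc k))"
      proof (cases "\<rho> k \<in> V0")
        case True
        then have "\<rho> (Suc k) = certificate_move E w U r (\<rho> k)"
          using c by (simp add: consistent0_def)
        moreover have "\<exists>u. safe_edge E w U r (\<rho> k) u"
          using cert Suc.IH True by (simp add: energy_certificate_def)
        ultimately show ?thesis using certificate_move_safe by simp
      next
        case False
        then show ?thesis using Suc.IH cert p by (simp add: energy_certificate_def play_def)
      qed
      moreover have "r (\<rho> (Suc k)) \<le> K"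
        using \<open>safe_edge E w U r (\<rho> k) (\<rho> (Suc k))\<close> cert
        by (simp add: safe_edge_def energy_certificate_def)
      ultimately show ?case
        using Suc.IH unfolding EL_cap_prefix_Suc by (auto simp: safe_edge_def split: rweight.split)
    qed
    have "0 \<le> EL_cap w K (map \<rho> [0..<Suc k])" for k
      using invariant[of k] by linarith
    then show ?thesis by (simp add: Recharge_def del: upt_Suc)
  qed
  moreover have "strategy0 V V0 E ?\<sigma>"
    using certificate_move_edge[OF ar] by (simp add: strategy0_def)
  ultimately show ?thesis by (simp add: wins0_with_def)
qed

locale recharge_winning_strategy =
  fixes V V0 :: "'v set" and E :: "('v \<times> 'v) set" and vI :: 'v
    and w :: "'v \<times> 'v \<Rightarrow> rweight" and cap :: nat and \<sigma> :: "'v list \<Rightarrow> 'v"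
  assumes arena: "arena V V0 E vI"
    and winning: "wins0_with V V0 E vI (Recharge w cap) \<sigma>"
begin

definition reached_with :: "'v \<Rightarrow> nat \<Rightarrow> bool" where
  "reached_with v b \<longleftrightarrow> (\<exists>\<rho> k. play E vI \<rho> \<and> consistent0 V0 \<sigma> \<rho> \<and> \<rho> k = v \<and>
     EL_cap w cap (map \<rho> [0..<Suc k]) = int b)"

definition reached :: "'v set" where
  "reached = {v. \<exists>b. reached_with v b}"

definition least_energy :: "'v \<Rightarrow> nat" where
  "least_energy v = (LEAST b. reached_with v b)"

lemma strategy: "strategy0 V V0 E \<sigma>"
  using winning by (simp add: wins0_with_def)

lemma EL_cap_consistent_nonneg:
  "\<lbrakk>play E vI \<rho>; consistent0 V0 \<sigma> \<rho>\<rbrakk> \<Longrightarrow> 0 \<le> EL_cap w cap (map \<rho> [0..<Suc k])"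
  using winning by (simp add: wins0_with_def Recharge_def del: upt_Suc)

lemma reached_with_consistent_play:
  "\<lbrakk>play E vI \<rho>; consistent0 V0 \<sigma> \<rho>\<rbrakk> \<Longrightarrow> reached_with (\<rho> k) (nat (EL_cap w cap (map \<rho> [0..<Suc k])))"
  unfolding reached_with_def using EL_cap_consistent_nonneg by fastforce

lemma least_energy_le: "reached_with v b \<Longrightarrow> least_energy v \<le> b"
  unfolding least_energy_def by (rule Least_le)

lemma reached_with_least_energy: "v \<in> reached \<Longrightarrow> reached_with v (least_energy v)"
  unfolding reached_def least_energy_def by (auto intro: LeastI_ex)

lemma reached_subset: "reached \<subseteq> V"
  using play_in_vertices[OF arena] by (auto simp: reached_def reached_with_def)

lemma card_reached_le: "card reached \<le> card V"
  using arena reached_subset by (simp add: arena_def card_mono)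

lemma initial_reached: "vI \<in> reached"
proof -
  obtain \<rho> where "play E vI \<rho>" "consistent0 V0 \<sigma> \<rho>"
    using consistent_play_exists[OF arena strategy] by blast
  then show ?thesis
    using reached_with_consistent_play[of \<rho> 0] by (auto simp: reached_def play_def)
qed

text \<open>A minimal-energy history through \<open>v\<close> is followed by a safe edge, because the energy
  after that edge is again a level at which its target is reached.\<close>
lemma safe_edge_at_least_energy:
  assumes p: "play E vI \<rho>" "consistent0 V0 \<sigma> \<rho>"
    and least: "EL_cap w cap (map \<rho> [0..<Suc k]) = int (least_energy (\<rho> k))"
  shows "safe_edge E w reached least_energy (\<rho> k) (\<rho> (Suc k))"
proof -
  let ?el = "EL_cap w cap (map \<rho> [0..<Suc (Suc k)])"
  have reach: "reached_with (\<rho> (Suc k)) (nat ?el)"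
    using reached_with_consistent_play[OF p] .
  have "least_energy (\<rho> (Suc k)) + c \<le> least_energy (\<rho> k)" if "w (\<rho> k, \<rho> (Suc k)) = Cost c" for c
  proof -
    have "?el = int (least_energy (\<rho> k)) - int c"
      using that least by (simp only: EL_cap_prefix_Suc rweight.case)
    then show ?thesis
      using least_energy_le[OF reach] EL_cap_consistent_nonneg[OF p, of "Suc k"] by linarith
  qed
  moreover have "(\<rho> k, \<rho> (Suc k)) \<in> E" using p(1) by (simp add: play_def)
  ultimately show ?thesis using reach by (auto simp: safe_edge_def reached_def)
qed

lemma energy_certificate_reached: "energy_certificate V0 E w reached least_energy cap"
proof -
  have least_play: "\<exists>\<rho> k. play E vI \<rho> \<and> consistent0 V0 \<sigma> \<rho> \<and> \<rho> k = v \<and>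
      EL_cap w cap (map \<rho> [0..<Suc k]) = int (least_energy v)" if "v \<in> reached" for v
    using reached_with_least_energy[OF that] by (simp add: reached_with_def)
  have "least_energy v \<le> cap" if "v \<in> reached" for v
    using least_play[OF that] EL_cap_prefix_le_cap[of w cap] by (metis of_nat_le_iff)
  moreover have "\<exists>u. safe_edge E w reached least_energy v u" if "v \<in> reached" for v
    using least_play[OF that] safe_edge_at_least_energy by blast
  moreover have "safe_edge E w reached least_energy v u"
    if reached: "v \<in> reached" and opp: "v \<notin> V0" and edge: "(v, u) \<in> E" for v u
  proof -
    obtain \<rho> k where p: "play E vI \<rho>" "consistent0 V0 \<sigma> \<rho>" and v: "\<rho> k = v"
      and least: "EL_cap w cap (map \<rho> [0..<Suc k]) = int (least_energy v)"
      using least_play[OF reached] by blast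
    obtain \<rho>' where p': "play E vI \<rho>'" "consistent0 V0 \<sigma> \<rho>'"
      and prefix: "map \<rho>' [0..<Suc k] = map \<rho> [0..<Suc k]" and u: "\<rho>' (Suc k) = u"
      using consistent_play_deviation[OF arena strategy p, of k u] v opp edge by blast
    have v': "\<rho>' k = v" using arg_cong[OF prefix, of last] v by simp
    have "EL_cap w cap (map \<rho>' [0..<Suc k]) = int (least_energy (\<rho>' k))"
      unfolding prefix v' by (rule least)
    from safe_edge_at_least_energy[OF p' this] show ?thesis unfolding v' u .
  qed
  ultimately show ?thesis by (simp add: energy_certificate_def)
qed

lemma energy_certificate_ranked:
  "energy_certificate V0 E w reached (\<lambda>x. max_weight E w * rank_in reached least_energy x)
     ((card V - 1) * max_weight E w)"
proof -
  have "finite reached" using arena reached_subset finite_subset by (auto simp: arena_def)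
  moreover have "\<forall>e\<in>E. \<forall>c. w e = Cost c \<longrightarrow> c \<le> max_weight E w"
    using Cost_le_max_weight[OF finite_edges_of_arena[OF arena]] by blast
  ultimately have "energy_certificate V0 E w reached (\<lambda>x. max_weight E w * rank_in reached least_energy x)
     ((card reached - 1) * max_weight E w)"
    using energy_certificate_reached by (intro energy_certificate_rank_in)
  moreover have "(card reached - 1) * max_weight E w \<le> (card V - 1) * max_weight E w"
    using card_reached_le by (intro mult_le_mono1) linarith
  ultimately show ?thesis by (rule energy_certificate_mono)
qed

end

lemma induced_strategy_constant_memory:
  "induced_strategy m (\<lambda>_ _. m) (\<lambda>v _. f v) = (\<lambda>xs. f (last xs))"
proof -
  have "fold (\<lambda>_ _. m) es m = m" for es :: "('v \<times> 'v) list"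
    by (induction es) simp_all
  then have "upd_plus m (\<lambda>_ _. m) xs = m" for xs by (simp add: upd_plus_def)
  then show ?thesis by (simp add: induced_strategy_def fun_eq_iff)
qed

theorem corollary2:
  fixes V V0 :: "'v set" and E :: "('v \<times> 'v) set" and vI :: 'v
    and w :: "'v \<times> 'v \<Rightarrow> rweight"
  assumes "arena V V0 E vI"
    and "\<exists>cap::nat. wins0 V V0 E vI (Recharge w cap)"
  shows "wins0 V V0 E vI (Recharge w (3 * (card V - 1) * max_weight E w))
       \<and> (\<exists>(M::nat set) mI Upd Nxt. memory_structure E M mI Upd \<and> card M = 3 \<and>
            next_move V0 E M Nxt \<and>
            wins0_with V V0 E vI (Recharge w (3 * (card V - 1) * max_weight E w))
              (induced_strategy mI Upd Nxt))"
proof -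
  obtain cap \<sigma> where "wins0_with V V0 E vI (Recharge w cap) \<sigma>"
    using assms(2) by (auto simp: wins0_def)
  then interpret recharge_winning_strategy V V0 E vI w cap \<sigma>
    using assms(1) by unfold_locales
  let ?K = "3 * (card V - 1) * max_weight E w"
  let ?move = "certificate_move E w reached (\<lambda>x. max_weight E w * rank_in reached least_energy x)"
  have "energy_certificate V0 E w reached (\<lambda>x. max_weight E w * rank_in reached least_energy x) ?K"
    using energy_certificate_ranked by (rule energy_certificate_mono) simp
  from energy_certificate_positional_wins[OF assms(1) initial_reached this]
  have wins: "wins0_with V V0 E vI (Recharge w ?K) (induced_strategy (0::nat) (\<lambda>_ _. 0) (\<lambda>v _. ?move v))"
    by (simp only: induced_strategy_constant_memory)
  \<comment> \<open>The memory never leaves state \<open>0\<close>; the other two states only pad it to size three.\<close>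
  have "memory_structure E {0, 1, 2 :: nat} 0 (\<lambda>_ _. 0)" "card {0, 1, 2 :: nat} = 3"
    by (simp_all add: memory_structure_def)
  moreover have "next_move V0 E {0, 1, 2 :: nat} (\<lambda>v _. ?move v)"
    using certificate_move_edge[OF assms(1)] by (simp add: next_move_def)
  ultimately show ?thesis using wins unfolding wins0_def by blast
qed

end
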